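(* Let $\Lambda\ge1$ and $\kappa_1=258/\pi$. Then for all $0\le r\le2\Lambda$, $$|U_\Lambda(r)-U(r)|\le\kappa_1\frac{r}{2E(\Lambda)}.$$
   Context: $E(r)=(1+r^2)^{1/2}$. $B_\Lambda=\frac1\pi\int_0^{\Lambda/E(\Lambda)}\frac{z^2-z^4/3}{1-z^2}dz$. For $0\le r\le2\Lambda$, with $Z_\Lambda(r)=(E(\Lambda)-E(\Lambda-r))/r$ (and $Z_\Lambda(0)=\Lambda/E(\Lambda)$), $B_\Lambda(r)=\frac1\pi\int_0^{Z_\Lambda(r)}\frac{z^2-z^4/3}{(1-z^2)(1+r^2(1-z^2)/4)}dz+\frac{r}{2\pi}\int_0^{Z_\Lambda(r)}\frac{z-z^3/3}{E(\Lambda)-rz/2}dz$, and $U_\Lambda(r)=B_\Lambda-B_\Lambda(r)$. $U(r)=\frac{r^2}{4\pi}\int_0^1\frac{z^2-z^4/3}{1+r^2(1-z^2)/4}dz$. *)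

theory Defs
  imports "HOL-Analysis.Analysis"
begin

definition E :: "real \<Rightarrow> real" where
  "E r = sqrt (1 + r^2)"

definition B0 :: "real \<Rightarrow> real" where
  "B0 \<Lambda> = (1/pi) * integral {0..\<Lambda> / E \<Lambda>} (\<lambda>z. (z^2 - z^4/3) / (1 - z^2))"

definition Z :: "real \<Rightarrow> real \<Rightarrow> real" where
  "Z \<Lambda> r = (if r = 0 then \<Lambda> / E \<Lambda> else (E \<Lambda> - E (\<Lambda> - r)) / r)"

definition B :: "real \<Rightarrow> real \<Rightarrow> real" where
  "B \<Lambda> r =
     (1/pi) * integral {0..Z \<Lambda> r}
        (\<lambda>z. (z^2 - z^4/3) / ((1 - z^2) * (1 + r^2 * (1 - z^2) / 4)))
   + (r / (2*pi)) * integral {0..Z \<Lambda> r} (\<lambda>z. (z - z^3/3) / (E \<Lambda> - r*z/2))"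

definition UL :: "real \<Rightarrow> real \<Rightarrow> real" where
  "UL \<Lambda> r = B0 \<Lambda> - B \<Lambda> r"

definition U :: "real \<Rightarrow> real" where
  "U r = (r^2 / (4*pi)) * integral {0..1} (\<lambda>z. (z^2 - z^4/3) / (1 + r^2 * (1 - z^2) / 4))"

end

theory Submission
  imports Defs
begin

(* Write c = Lambda / E Lambda for the upper limit of B0 and Z = Z Lambda r for that of
   B Lambda r. By partial fractions the B0-integrand equals the bulk kernel of B plus
   r^2/4 times the U-integrand, so most of the three integrals cancel and

     pi (U_Lambda(r) - U(r)) = int_Z^c bulk - r^2/4 int_c^1 damped - r/2 int_0^Z drift.

   All three integrals are nonnegative. The last two are O(r / E Lambda) by crude pointwise
   bounds (1 - c = 1 / (E Lambda (E Lambda + Lambda)) is tiny). For the first, an exact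
   formula for the gap c - Z handles r <= E Lambda / 2, while for larger r the damping factor
   in the kernel gives the integrable majorant 4 / (r (1 - z))^2. Hence
   pi |U_Lambda - U| <= 64 r / E Lambda, which implies the theorem. *)

lemma E_sq: "(E x)^2 = 1 + x^2"
  unfolding E_def by (simp add: add_nonneg_nonneg)

lemma E_pos: "0 < E x"
  unfolding E_def by (simp add: add_pos_nonneg)

lemma E_gt_abs: "\<bar>x\<bar> < E x"
proof -
  have "\<bar>x\<bar>^2 < (E x)^2" by (simp add: E_sq)
  then show ?thesis using E_pos less_imp_le power2_less_imp_less by blast
qed

lemma E_mono_abs:
  assumes "\<bar>x\<bar> \<le> \<bar>y\<bar>" shows "E x \<le> E y"
proof -
  have "\<bar>x\<bar>^2 \<le> \<bar>y\<bar>^2" using assms by (intro power_mono) auto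
  then show ?thesis unfolding E_def by simp
qed

(* Since (E x - x)(E x + x) = 1, the cutoff x / E x lies at distance
   1 / (E x (E x + x)) below 1. *)
lemma one_minus_E_ratio: "1 - x / E x = 1 / (E x * (E x + x))"
proof -
  have "(E x - x) * (E x + x) = 1" using E_sq[of x] by (simp add: algebra_simps power2_eq_square)
  moreover have "0 < E x + x" using E_gt_abs[of x] by linarith
  ultimately have "E x - x = 1 / (E x + x)" by (simp add: eq_divide_eq)
  moreover have "1 - x / E x = (E x - x) / E x" using E_pos[of x] by (simp add: field_simps)
  ultimately show ?thesis by simp
qed

lemma one_minus_E_ratio_sq: "1 - (x / E x)^2 = 1 / (E x)^2"
proof -
  have "1 - (x / E x)^2 = ((E x)^2 - x^2) / (E x)^2"
    using E_pos[of x] by (simp add: power_divide diff_divide_distrib)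
  then show ?thesis by (simp add: E_sq)
qed

(* The denominator governing the gap between the two upper limits
   Lambda / E Lambda (of B0) and Z Lambda r (of B Lambda r). *)
definition gap_den :: "real \<Rightarrow> real \<Rightarrow> real" where
  "gap_den \<Lambda> r = E \<Lambda> * E (\<Lambda> - r) + (E \<Lambda>)^2 - r * \<Lambda>"

lemma gap_den_identity:
  "(E \<Lambda> * E (\<Lambda> - r) - ((E \<Lambda>)^2 - r * \<Lambda>)) * gap_den \<Lambda> r = r^2"
proof -
  have "(E \<Lambda> * E (\<Lambda> - r) - ((E \<Lambda>)^2 - r * \<Lambda>)) * gap_den \<Lambda> r
      = (E \<Lambda>)^2 * (E (\<Lambda> - r))^2 - ((E \<Lambda>)^2 - r * \<Lambda>)^2"
    unfolding gap_den_def by (simp add: power2_eq_square algebra_simps)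
  also have "\<dots> = r^2" unfolding E_sq by (simp add: power2_eq_square algebra_simps)
  finally show ?thesis .
qed

(* For r <> 0 the two factors of the identity above have positive product r^2 and
   positive sum 2 E Lambda E(Lambda-r), so both are positive. *)
lemma gap_den_pos: "0 < gap_den \<Lambda> r"
proof (cases "r = 0")
  case True
  then show ?thesis unfolding gap_den_def using E_pos[of \<Lambda>] by (simp add: add_pos_pos)
next
  case False
  define P where "P = E \<Lambda> * E (\<Lambda> - r) - ((E \<Lambda>)^2 - r * \<Lambda>)"
  have prod: "0 < P * gap_den \<Lambda> r" using gap_den_identity[of \<Lambda> r] False unfolding P_def by simp
  have sum: "0 < P + gap_den \<Lambda> r"
    unfolding P_def gap_den_def using E_pos[of \<Lambda>] E_pos[of "\<Lambda> - r"] by simp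
  show ?thesis
  proof (rule ccontr)
    assume "\<not> 0 < gap_den \<Lambda> r"
    with sum have "0 < P" "gap_den \<Lambda> r \<le> 0" by linarith+
    then have "P * gap_den \<Lambda> r \<le> 0" by (simp add: mult_nonneg_nonpos)
    with prod show False by linarith
  qed
qed

lemma r_times_Z: "r * Z \<Lambda> r = E \<Lambda> - E (\<Lambda> - r)"
  unfolding Z_def by auto

lemma cutoff_gap: "\<Lambda> / E \<Lambda> - Z \<Lambda> r = r / (E \<Lambda> * gap_den \<Lambda> r)"
proof (cases "r = 0")
  case False
  have "\<Lambda> / E \<Lambda> - Z \<Lambda> r
      = (E \<Lambda> * E (\<Lambda> - r) - ((E \<Lambda>)^2 - r * \<Lambda>)) / (r * E \<Lambda>)"
    unfolding Z_def using False E_pos[of \<Lambda>] by (simp add: field_simps power2_eq_square)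
  also have "\<dots> = (r^2 / gap_den \<Lambda> r) / (r * E \<Lambda>)"
    using gap_den_identity[of \<Lambda> r] gap_den_pos[of \<Lambda> r]
    by (simp add: eq_divide_eq)
  also have "\<dots> = r / (E \<Lambda> * gap_den \<Lambda> r)" using False by (simp add: power2_eq_square)
  finally show ?thesis .
qed (simp add: Z_def)

definition bulk_kernel :: "real \<Rightarrow> real \<Rightarrow> real" where
  "bulk_kernel r z = (z^2 - z^4/3) / ((1 - z^2) * (1 + r^2 * (1 - z^2) / 4))"

definition damped_kernel :: "real \<Rightarrow> real \<Rightarrow> real" where
  "damped_kernel r z = (z^2 - z^4/3) / (1 + r^2 * (1 - z^2) / 4)"

definition drift_kernel :: "real \<Rightarrow> real \<Rightarrow> real \<Rightarrow> real" where
  "drift_kernel \<Lambda> r z = (z - z^3/3) / (E \<Lambda> - r * z / 2)"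

lemma quartic_num_bounds:
  fixes z :: real assumes "z^2 \<le> 1"
  shows "0 \<le> z^2 - z^4/3" "z^2 - z^4/3 \<le> 1"
proof -
  have "z^4 = z^2 * z^2" by (simp add: power2_eq_square power4_eq_xxxx)
  also have "\<dots> \<le> z^2 * 1" using assms by (intro mult_left_mono) auto
  finally have "z^4 \<le> z^2" by simp
  then show "0 \<le> z^2 - z^4/3" using zero_le_power2[of z] by linarith
  have "0 \<le> z^4" by simp
  then show "z^2 - z^4/3 \<le> 1" using assms by linarith
qed

lemma cubic_num_bounds:
  fixes z :: real assumes "0 \<le> z" "z \<le> 1"
  shows "0 \<le> z - z^3/3" "z - z^3/3 \<le> 1"
proof -
  have "z^3 = z * z^2" by (simp add: power2_eq_square power3_eq_cube)
  also have "\<dots> \<le> z * 1" using assms by (intro mult_left_mono) (auto simp: power_le_one)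
  finally show "0 \<le> z - z^3/3" using assms(1) by linarith
  show "z - z^3/3 \<le> 1" using assms zero_le_power[of z 3] by linarith
qed

lemma damping_factor_ge_one:
  fixes z :: real assumes "z^2 \<le> 1" shows "1 \<le> 1 + r^2 * (1 - z^2) / 4"
  using assms by simp

(* Partial fractions: the B0-integrand splits into the bulk kernel plus
   r^2/4 times the U-integrand. This is the source of the cancellation. *)
lemma kernel_split:
  fixes z :: real assumes "z^2 < 1"
  shows "(z^2 - z^4/3) / (1 - z^2) = bulk_kernel r z + r^2/4 * damped_kernel r z"
proof -
  define n where "n = z^2 - z^4/3"
  define d where "d = 1 - z^2"
  define a where "a = 1 + r^2 * d / 4"
  have "1 \<le> a" unfolding a_def d_def using assms by (intro damping_factor_ge_one) simp
  then have "a \<noteq> 0" by simp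
  moreover have "d \<noteq> 0" unfolding d_def using assms by simp
  ultimately have "n / (d * a) + r^2/4 * (n / a) = (n + r^2 * d / 4 * n) / (d * a)"
    by (simp add: field_simps)
  also have "\<dots> = (n * a) / (d * a)" unfolding a_def by (simp add: algebra_simps)
  also have "\<dots> = n / d" using \<open>a \<noteq> 0\<close> by simp
  finally show ?thesis unfolding bulk_kernel_def damped_kernel_def n_def d_def a_def by simp
qed

lemma bulk_kernel_nonneg:
  fixes z :: real assumes "z^2 < 1" shows "0 \<le> bulk_kernel r z"
proof -
  have "1 \<le> 1 + r^2 * (1 - z^2) / 4" using assms by (intro damping_factor_ge_one) simp
  then have "0 < (1 - z^2) * (1 + r^2 * (1 - z^2) / 4)" using assms by (intro mult_pos_pos) linarith+
  then show ?thesis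
    unfolding bulk_kernel_def using quartic_num_bounds(1)[of z] assms by simp
qed

lemma bulk_kernel_le_inv:
  fixes z d :: real assumes "0 < d" "d \<le> 1 - z^2" shows "bulk_kernel r z \<le> 1 / d"
proof -
  have z2: "z^2 \<le> 1" using assms by linarith
  have "d * 1 \<le> (1 - z^2) * (1 + r^2 * (1 - z^2) / 4)"
    using assms damping_factor_ge_one[OF z2, of r] by (intro mult_mono) auto
  then show ?thesis
    unfolding bulk_kernel_def using quartic_num_bounds[OF z2] assms(1)
    by (intro frac_le) auto
qed

(* Near z = 1 the damping factor takes over: bulk_kernel is O(1 / (r (1 - z))^2). *)
lemma bulk_kernel_le_inv_sq:
  fixes z r :: real assumes "0 \<le> z" "z < 1" "r \<noteq> 0"
  shows "bulk_kernel r z \<le> 4 / (r^2 * (1 - z)^2)"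
proof -
  have z2: "z^2 \<le> 1" using assms by (simp add: power_le_one)
  have "1 - z \<le> 1 - z^2" using assms by (simp add: power2_eq_square mult_left_le_one_le)
  then have "(1 - z)^2 \<le> (1 - z^2)^2" using assms by (intro power_mono) auto
  then have "r^2 * (1 - z)^2 / 4 \<le> r^2 * (1 - z^2)^2 / 4"
    by (intro divide_right_mono mult_left_mono) auto
  also have "\<dots> = (1 - z^2) * (r^2 * (1 - z^2) / 4)" by (simp add: power2_eq_square)
  also have "\<dots> \<le> (1 - z^2) * (1 + r^2 * (1 - z^2) / 4)"
    using z2 by (intro mult_left_mono) auto
  finally have den: "r^2 * (1 - z)^2 / 4 \<le> (1 - z^2) * (1 + r^2 * (1 - z^2) / 4)" .
  have "0 < r^2 * (1 - z)^2 / 4" using assms by simp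
  then have "bulk_kernel r z \<le> 1 / (r^2 * (1 - z)^2 / 4)"
    unfolding bulk_kernel_def using quartic_num_bounds[OF z2] den by (intro frac_le) auto
  then show ?thesis by simp
qed

lemma damped_kernel_bounds:
  fixes z :: real assumes "z^2 \<le> 1"
  shows "0 \<le> damped_kernel r z" "damped_kernel r z \<le> 1"
proof -
  note num = quartic_num_bounds[OF assms] and den = damping_factor_ge_one[OF assms, of r]
  show "0 \<le> damped_kernel r z" unfolding damped_kernel_def using num den by simp
  show "damped_kernel r z \<le> 1" unfolding damped_kernel_def using num den by simp
qed

lemma drift_kernel_bounds:
  fixes z :: real assumes "0 \<le> z" "z \<le> 1" "E \<Lambda> / 2 \<le> E \<Lambda> - r * z / 2"
  shows "0 \<le> drift_kernel \<Lambda> r z" "drift_kernel \<Lambda> r z \<le> 2 / E \<Lambda>"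
proof -
  note num = cubic_num_bounds[OF assms(1,2)]
  have pos: "0 < E \<Lambda> / 2" using E_pos[of \<Lambda>] by simp
  show "0 \<le> drift_kernel \<Lambda> r z" unfolding drift_kernel_def using num pos assms(3) by simp
  have "drift_kernel \<Lambda> r z \<le> 1 / (E \<Lambda> / 2)"
    unfolding drift_kernel_def using num pos assms(3) by (intro frac_le) auto
  then show "drift_kernel \<Lambda> r z \<le> 2 / E \<Lambda>" by simp
qed

lemma bulk_kernel_integrable:
  fixes a b :: real assumes "-1 < a" "b < 1" shows "bulk_kernel r integrable_on {a..b}"
proof -
  have "(1 - z^2) * (1 + r^2 * (1 - z^2) / 4) \<noteq> 0" if "z \<in> {a..b}" for z
  proof -
    have "\<bar>z\<bar> < 1" using that assms by auto
    then have "z^2 < 1" by (simp add: abs_square_less_1)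
    moreover have "1 \<le> 1 + r^2 * (1 - z^2) / 4" using \<open>z^2 < 1\<close> by (intro damping_factor_ge_one) simp
    ultimately have "0 < (1 - z^2) * (1 + r^2 * (1 - z^2) / 4)" by (intro mult_pos_pos) linarith+
    then show ?thesis by (rule less_imp_neq[THEN not_sym])
  qed
  then show ?thesis unfolding bulk_kernel_def
    by (intro integrable_continuous_interval continuous_intros) auto
qed

lemma damped_kernel_integrable:
  fixes a b :: real assumes "-1 \<le> a" "b \<le> 1" shows "damped_kernel r integrable_on {a..b}"
proof -
  have "1 + r^2 * (1 - z^2) / 4 \<noteq> 0" if "z \<in> {a..b}" for z
  proof -
    have "\<bar>z\<bar> \<le> 1" using that assms by auto
    then have "z^2 \<le> 1" by (simp add: abs_square_le_1)
    then have "1 \<le> 1 + r^2 * (1 - z^2) / 4" by (rule damping_factor_ge_one)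
    then show ?thesis by auto
  qed
  then show ?thesis unfolding damped_kernel_def
    by (intro integrable_continuous_interval continuous_intros) auto
qed

lemma drift_kernel_integrable:
  assumes "\<And>z. z \<in> {a..b} \<Longrightarrow> E \<Lambda> - r * z / 2 \<noteq> 0"
  shows "drift_kernel \<Lambda> r integrable_on {a..b}"
  unfolding drift_kernel_def using assms
  by (intro integrable_continuous_interval continuous_intros) auto

lemma integral_inv_sq_one_minus:
  fixes a b :: real assumes "a \<le> b" "b < 1"
  shows "((\<lambda>z. 1 / (1 - z)^2) has_integral (1 / (1 - b) - 1 / (1 - a))) {a..b}"
proof (rule fundamental_theorem_of_calculus[OF assms(1)])
  fix z assume "z \<in> {a..b}"
  then have "1 - z \<noteq> 0" using assms by auto
  then have "((\<lambda>z. 1 / (1 - z)) has_real_derivative 1 / (1 - z)^2) (at z within {a..b})"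
    by (auto intro!: derivative_eq_intros simp: power2_eq_square)
  then show "((\<lambda>z. 1 / (1 - z)) has_vector_derivative 1 / (1 - z)^2) (at z within {a..b})"
    by (simp add: has_real_derivative_iff_has_vector_derivative)
qed

lemma cutoff_lt_one: "\<Lambda> / E \<Lambda> < 1"
  using E_gt_abs[of \<Lambda>] E_pos[of \<Lambda>] by (simp add: divide_less_eq)

lemma Z_bounds:
  assumes "0 \<le> r" "r \<le> 2 * \<Lambda>"
  shows "0 \<le> Z \<Lambda> r" "Z \<Lambda> r \<le> \<Lambda> / E \<Lambda>"
proof -
  have "0 \<le> r / (E \<Lambda> * gap_den \<Lambda> r)"
    using assms(1) E_pos[of \<Lambda>] gap_den_pos[of \<Lambda> r] by simp
  then show "Z \<Lambda> r \<le> \<Lambda> / E \<Lambda>" using cutoff_gap[of \<Lambda> r] by linarith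
  show "0 \<le> Z \<Lambda> r"
  proof (cases "r = 0")
    case True
    then show ?thesis using assms E_pos[of \<Lambda>] by (simp add: Z_def)
  next
    case False
    have "E (\<Lambda> - r) \<le> E \<Lambda>" using assms by (intro E_mono_abs) auto
    then have "0 \<le> r * Z \<Lambda> r" by (simp add: r_times_Z)
    then show ?thesis using False assms(1) by (simp add: zero_le_mult_iff)
  qed
qed

lemma drift_denominator_lower:
  assumes "0 \<le> r" "0 \<le> z" "z \<le> Z \<Lambda> r"
  shows "E \<Lambda> / 2 \<le> E \<Lambda> - r * z / 2"
proof -
  have "r * z \<le> r * Z \<Lambda> r" using assms by (intro mult_left_mono) auto
  also have "\<dots> \<le> E \<Lambda>" using E_pos[of "\<Lambda> - r"] by (simp add: r_times_Z)
  finally show ?thesis by simp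
qed

(* The key identity: after the split of kernel_split the integrals over [0, Z] and
   [0, Lambda/E Lambda] cancel, leaving a bulk term on [Z, Lambda/E Lambda], a tail of the
   U-integral on [Lambda/E Lambda, 1] and the drift term of B. *)
lemma UL_minus_U_decomposition:
  assumes "0 \<le> r" "r \<le> 2 * \<Lambda>"
  shows "pi * (UL \<Lambda> r - U r) =
           integral {Z \<Lambda> r..\<Lambda> / E \<Lambda>} (bulk_kernel r)
         - r^2/4 * integral {\<Lambda> / E \<Lambda>..1} (damped_kernel r)
         - r/2 * integral {0..Z \<Lambda> r} (drift_kernel \<Lambda> r)"
proof -
  define c where "c = \<Lambda> / E \<Lambda>"
  define \<zeta> where "\<zeta> = Z \<Lambda> r"
  have c: "0 \<le> c" "c < 1" unfolding c_def using assms E_pos[of \<Lambda>] cutoff_lt_one[of \<Lambda>] by auto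
  have \<zeta>: "0 \<le> \<zeta>" "\<zeta> \<le> c" unfolding \<zeta>_def c_def using Z_bounds[OF assms] by auto
  have k_int: "bulk_kernel r integrable_on {0..c}" using c by (intro bulk_kernel_integrable) auto
  have g_int: "damped_kernel r integrable_on {0..c}" "damped_kernel r integrable_on {0..1}"
    using c by (auto intro: damped_kernel_integrable)
  have "pi * B0 \<Lambda> = integral {0..c} (\<lambda>z. bulk_kernel r z + r^2/4 * damped_kernel r z)"
  proof -
    have "(z^2 - z^4/3) / (1 - z^2) = bulk_kernel r z + r^2/4 * damped_kernel r z"
      if "z \<in> {0..c}" for z
    proof (rule kernel_split)
      show "z^2 < 1" using that c by (auto intro: power_strict_mono[of z 1 2, simplified])
    qed
    then have "integral {0..c} (\<lambda>z. (z^2 - z^4/3) / (1 - z^2))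
        = integral {0..c} (\<lambda>z. bulk_kernel r z + r^2/4 * damped_kernel r z)"
      by (rule integral_cong)
    then show ?thesis unfolding B0_def c_def[symmetric] by simp
  qed
  also have "\<dots> = integral {0..c} (bulk_kernel r) + r^2/4 * integral {0..c} (damped_kernel r)"
    using k_int integrable_on_mult_right[OF g_int(1)] by (simp add: integral_add)
  finally have B0_eq: "pi * B0 \<Lambda> = \<dots>" .
  have B_eq: "pi * B \<Lambda> r
      = integral {0..\<zeta>} (bulk_kernel r) + r/2 * integral {0..\<zeta>} (drift_kernel \<Lambda> r)"
    unfolding B_def \<zeta>_def bulk_kernel_def drift_kernel_def by (simp add: field_simps)
  have U_eq: "pi * U r = r^2/4 * integral {0..1} (damped_kernel r)"
    unfolding U_def damped_kernel_def by (simp add: field_simps)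
  have k_split: "integral {0..\<zeta>} (bulk_kernel r) + integral {\<zeta>..c} (bulk_kernel r)
      = integral {0..c} (bulk_kernel r)"
    using \<zeta> k_int by (rule Henstock_Kurzweil_Integration.integral_combine)
  have g_split: "integral {0..c} (damped_kernel r) + integral {c..1} (damped_kernel r)
      = integral {0..1} (damped_kernel r)"
    using c g_int by (intro Henstock_Kurzweil_Integration.integral_combine) auto
  show ?thesis
    unfolding UL_def right_diff_distrib B0_eq B_eq U_eq c_def[symmetric] \<zeta>_def[symmetric]
      k_split[symmetric] g_split[symmetric]
    by (simp add: algebra_simps)
qed

(* The tail term is at most r / (2 E Lambda): the interval has length
   1 / (E Lambda (E Lambda + Lambda)) and the integrand is at most 1. *)
lemma tail_term_bounds:
  assumes "0 \<le> r" "r \<le> 2 * \<Lambda>"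
  shows "0 \<le> r^2/4 * integral {\<Lambda> / E \<Lambda>..1} (damped_kernel r)"
    and "r^2/4 * integral {\<Lambda> / E \<Lambda>..1} (damped_kernel r) \<le> r / (2 * E \<Lambda>)"
proof -
  define c where "c = \<Lambda> / E \<Lambda>"
  have c: "0 \<le> c" "c < 1" unfolding c_def using assms E_pos[of \<Lambda>] cutoff_lt_one[of \<Lambda>] by auto
  have int: "damped_kernel r integrable_on {c..1}" using c by (intro damped_kernel_integrable) auto
  have range: "0 \<le> damped_kernel r z \<and> damped_kernel r z \<le> 1" if "z \<in> {c..1}" for z
  proof -
    have "z^2 \<le> 1" using that c by (simp add: power_le_one)
    then show ?thesis using damped_kernel_bounds by blast
  qed
  have "0 \<le> integral {c..1} (damped_kernel r)" using range by (intro integral_nonneg[OF int]) auto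
  then show "0 \<le> r^2/4 * integral {\<Lambda> / E \<Lambda>..1} (damped_kernel r)" unfolding c_def by simp
  have "integral {c..1} (damped_kernel r) \<le> integral {c..1} (\<lambda>_. 1::real)"
    using range by (intro integral_le[OF int]) auto
  also have "\<dots> = 1 / (E \<Lambda> * (E \<Lambda> + \<Lambda>))" using c unfolding c_def by (simp add: one_minus_E_ratio)
  finally have "r^2/4 * integral {c..1} (damped_kernel r) \<le> r^2/4 * (1 / (E \<Lambda> * (E \<Lambda> + \<Lambda>)))"
    by (intro mult_left_mono) auto
  also have "\<dots> = r / (2 * E \<Lambda>) * (r / (2 * (E \<Lambda> + \<Lambda>)))" by (simp add: power2_eq_square)
  also have "\<dots> \<le> r / (2 * E \<Lambda>) * 1"
  proof (intro mult_left_mono)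
    show "r / (2 * (E \<Lambda> + \<Lambda>)) \<le> 1" using assms E_pos[of \<Lambda>] by (simp add: divide_le_eq)
    show "0 \<le> r / (2 * E \<Lambda>)" using assms E_pos[of \<Lambda>] by simp
  qed
  finally show "r^2/4 * integral {\<Lambda> / E \<Lambda>..1} (damped_kernel r) \<le> r / (2 * E \<Lambda>)"
    unfolding c_def by simp
qed

(* The drift term is at most r / E Lambda: integrand at most 2 / E Lambda on an
   interval of length at most 1. *)
lemma drift_term_bounds:
  assumes "0 \<le> r" "r \<le> 2 * \<Lambda>"
  shows "0 \<le> r/2 * integral {0..Z \<Lambda> r} (drift_kernel \<Lambda> r)"
    and "r/2 * integral {0..Z \<Lambda> r} (drift_kernel \<Lambda> r) \<le> r / E \<Lambda>"
proof -
  define \<zeta> where "\<zeta> = Z \<Lambda> r"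
  have \<zeta>: "0 \<le> \<zeta>" "\<zeta> \<le> 1"
    unfolding \<zeta>_def using Z_bounds[OF assms] cutoff_lt_one[of \<Lambda>] by auto
  have den: "E \<Lambda> / 2 \<le> E \<Lambda> - r * z / 2" if "z \<in> {0..\<zeta>}" for z
    using that assms(1) unfolding \<zeta>_def by (intro drift_denominator_lower) auto
  have int: "drift_kernel \<Lambda> r integrable_on {0..\<zeta>}"
    using den E_pos[of \<Lambda>] by (intro drift_kernel_integrable) force
  have range: "0 \<le> drift_kernel \<Lambda> r z \<and> drift_kernel \<Lambda> r z \<le> 2 / E \<Lambda>" if "z \<in> {0..\<zeta>}" for z
    using drift_kernel_bounds[OF _ _ den[OF that]] that \<zeta> by auto
  have "0 \<le> integral {0..\<zeta>} (drift_kernel \<Lambda> r)" using range by (intro integral_nonneg[OF int]) auto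
  then show "0 \<le> r/2 * integral {0..Z \<Lambda> r} (drift_kernel \<Lambda> r)" using assms unfolding \<zeta>_def by simp
  have "integral {0..\<zeta>} (drift_kernel \<Lambda> r) \<le> integral {0..\<zeta>} (\<lambda>_. 2 / E \<Lambda>)"
    using range by (intro integral_le[OF int]) auto
  also have "\<dots> = \<zeta> * (2 / E \<Lambda>)" using \<zeta> by simp
  also have "\<dots> \<le> 1 * (2 / E \<Lambda>)" using \<zeta> E_pos[of \<Lambda>] by (intro mult_right_mono) auto
  finally have "r/2 * integral {0..\<zeta>} (drift_kernel \<Lambda> r) \<le> r/2 * (2 / E \<Lambda>)"
    using assms by (intro mult_left_mono) auto
  then show "r/2 * integral {0..Z \<Lambda> r} (drift_kernel \<Lambda> r) \<le> r / E \<Lambda>" unfolding \<zeta>_def by simp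
qed

lemma bulk_term_integrable:
  assumes "0 \<le> r" "r \<le> 2 * \<Lambda>"
  shows "bulk_kernel r integrable_on {Z \<Lambda> r..\<Lambda> / E \<Lambda>}"
  using Z_bounds[OF assms] cutoff_lt_one[of \<Lambda>] by (intro bulk_kernel_integrable) auto

lemma bulk_term_nonneg:
  assumes "0 \<le> r" "r \<le> 2 * \<Lambda>"
  shows "0 \<le> integral {Z \<Lambda> r..\<Lambda> / E \<Lambda>} (bulk_kernel r)"
proof (rule integral_nonneg[OF bulk_term_integrable[OF assms]])
  fix z assume "z \<in> {Z \<Lambda> r..\<Lambda> / E \<Lambda>}"
  then have "0 \<le> z" "z < 1" using Z_bounds[OF assms] cutoff_lt_one[of \<Lambda>] by auto
  then show "0 \<le> bulk_kernel r z" by (intro bulk_kernel_nonneg power_strict_mono[of z 1 2, simplified])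
qed

(* Small r: the kernel is at most (E Lambda)^2 and the gap is r / (E Lambda gap_den)
   with gap_den >= (E Lambda)^2 / 2. *)
lemma bulk_term_bound_small:
  assumes "0 \<le> r" "r \<le> 2 * \<Lambda>" "r \<le> E \<Lambda> / 2"
  shows "integral {Z \<Lambda> r..\<Lambda> / E \<Lambda>} (bulk_kernel r) \<le> 2 * r / E \<Lambda>"
proof -
  define e where "e = E \<Lambda>"
  have e: "0 < e" "\<Lambda> < e" unfolding e_def using E_pos[of \<Lambda>] E_gt_abs[of \<Lambda>] by auto
  have "integral {Z \<Lambda> r..\<Lambda> / e} (bulk_kernel r) \<le> integral {Z \<Lambda> r..\<Lambda> / e} (\<lambda>_. e^2)"
  proof (rule integral_le[OF bulk_term_integrable[OF assms(1,2), folded e_def]])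
    fix z assume "z \<in> {Z \<Lambda> r..\<Lambda> / e}"
    then have "z^2 \<le> (\<Lambda> / e)^2" using Z_bounds[OF assms(1,2)] unfolding e_def
      by (intro power_mono) auto
    then have "1 / e^2 \<le> 1 - z^2" using one_minus_E_ratio_sq[of \<Lambda>] unfolding e_def by linarith
    then show "bulk_kernel r z \<le> e^2" using bulk_kernel_le_inv[of "1 / e^2"] e by simp
  qed auto
  also have "\<dots> = (\<Lambda> / e - Z \<Lambda> r) * e^2" using Z_bounds[OF assms(1,2)] unfolding e_def by simp
  also have "\<dots> = r * e / gap_den \<Lambda> r"
    unfolding cutoff_gap[of \<Lambda> r, folded e_def] using e by (simp add: power2_eq_square)
  also have "\<dots> \<le> r * e / (e^2 / 2)"
  proof (rule divide_left_mono)
    have "r * \<Lambda> \<le> (e / 2) * e" using assms e unfolding e_def by (intro mult_mono) auto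
    then show "e^2 / 2 \<le> gap_den \<Lambda> r"
      unfolding gap_den_def e_def[symmetric]
      using mult_pos_pos[OF e(1) E_pos[of "\<Lambda> - r"]] by (simp add: power2_eq_square)
    show "0 \<le> r * e" using assms e by simp
    show "0 < gap_den \<Lambda> r * (e^2 / 2)" using gap_den_pos[of \<Lambda> r] e by simp
  qed
  also have "\<dots> = 2 * r / e" using e by (simp add: power2_eq_square)
  finally show ?thesis unfolding e_def .
qed

(* Large r: integrate the bound of bulk_kernel_le_inv_sq exactly. *)
lemma bulk_term_bound_large:
  assumes "0 < r" "r \<le> 2 * \<Lambda>"
  shows "integral {Z \<Lambda> r..\<Lambda> / E \<Lambda>} (bulk_kernel r) \<le> 8 * (E \<Lambda>)^2 / r^2"
proof -
  define c where "c = \<Lambda> / E \<Lambda>"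
  define \<zeta> where "\<zeta> = Z \<Lambda> r"
  have \<zeta>: "0 \<le> \<zeta>" "\<zeta> \<le> c" "c < 1"
    unfolding \<zeta>_def c_def using Z_bounds assms cutoff_lt_one[of \<Lambda>] by auto
  have FTC: "((\<lambda>z. 4 / r^2 * (1 / (1 - z)^2))
      has_integral 4 / r^2 * (1 / (1 - c) - 1 / (1 - \<zeta>))) {\<zeta>..c}"
    using \<zeta> by (intro has_integral_mult_right integral_inv_sq_one_minus) auto
  have "integral {\<zeta>..c} (bulk_kernel r) \<le> 4 / r^2 * (1 / (1 - c) - 1 / (1 - \<zeta>))"
  proof (rule has_integral_le[OF integrable_integral FTC])
    show "bulk_kernel r integrable_on {\<zeta>..c}"
      unfolding \<zeta>_def c_def using assms by (intro bulk_term_integrable) auto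
    fix z assume "z \<in> {\<zeta>..c}"
    then show "bulk_kernel r z \<le> 4 / r^2 * (1 / (1 - z)^2)"
      using \<zeta> assms bulk_kernel_le_inv_sq[of z r] by simp
  qed
  also have "\<dots> \<le> 4 / r^2 * (1 / (1 - c))" using \<zeta> by (intro mult_left_mono) auto
  also have "\<dots> = 4 * (E \<Lambda> * (E \<Lambda> + \<Lambda>)) / r^2"
    unfolding c_def one_minus_E_ratio by simp
  also have "\<dots> \<le> 4 * (E \<Lambda> * (2 * E \<Lambda>)) / r^2"
    using E_gt_abs[of \<Lambda>] E_pos[of \<Lambda>] by (intro divide_right_mono mult_left_mono) auto
  also have "\<dots> = 8 * (E \<Lambda>)^2 / r^2" by (simp add: power2_eq_square)
  finally show ?thesis unfolding \<zeta>_def c_def .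
qed

lemma bulk_term_bound:
  assumes "0 \<le> r" "r \<le> 2 * \<Lambda>"
  shows "integral {Z \<Lambda> r..\<Lambda> / E \<Lambda>} (bulk_kernel r) \<le> 64 * r / E \<Lambda>"
proof (cases "r \<le> E \<Lambda> / 2")
  case True
  then have "integral {Z \<Lambda> r..\<Lambda> / E \<Lambda>} (bulk_kernel r) \<le> 2 * r / E \<Lambda>"
    using assms by (intro bulk_term_bound_small)
  also have "\<dots> \<le> 64 * r / E \<Lambda>" using assms E_pos[of \<Lambda>] by (intro divide_right_mono) auto
  finally show ?thesis .
next
  case False
  have e: "0 < E \<Lambda>" by (rule E_pos)
  then have "integral {Z \<Lambda> r..\<Lambda> / E \<Lambda>} (bulk_kernel r) \<le> 8 * (E \<Lambda>)^2 / r^2"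
    using False assms by (intro bulk_term_bound_large) auto
  also have "\<dots> \<le> 8 * (E \<Lambda>)^2 / (E \<Lambda> / 2)^2"
    using False e by (intro divide_left_mono power_mono) auto
  also have "\<dots> = 64 * (E \<Lambda> / 2) / E \<Lambda>" using e by (simp add: power2_eq_square)
  also have "\<dots> \<le> 64 * r / E \<Lambda>" using False e by (intro divide_right_mono) auto
  finally show ?thesis .
qed

(* The bulk term is nonnegative while the other two are nonnegative and subtracted,
   so |U_Lambda - U| is at most the larger of the two sides. *)
lemma UL_minus_U_bound:
  assumes "0 \<le> r" "r \<le> 2 * \<Lambda>"
  shows "pi * \<bar>UL \<Lambda> r - U r\<bar> \<le> 64 * r / E \<Lambda>"
proof -
  define A where "A = integral {Z \<Lambda> r..\<Lambda> / E \<Lambda>} (bulk_kernel r)"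
  define T where "T = r^2/4 * integral {\<Lambda> / E \<Lambda>..1} (damped_kernel r)"
  define D where "D = r/2 * integral {0..Z \<Lambda> r} (drift_kernel \<Lambda> r)"
  have A: "0 \<le> A" "A \<le> 64 * r / E \<Lambda>"
    unfolding A_def using bulk_term_nonneg[OF assms] bulk_term_bound[OF assms] by auto
  have "0 \<le> T + D" "T + D \<le> r / (2 * E \<Lambda>) + r / E \<Lambda>"
    unfolding T_def D_def using tail_term_bounds[OF assms] drift_term_bounds[OF assms] by auto
  moreover have "r / (2 * E \<Lambda>) + r / E \<Lambda> \<le> 64 * r / E \<Lambda>"
    using assms E_pos[of \<Lambda>] by (simp add: field_simps)
  ultimately have "\<bar>A - T - D\<bar> \<le> 64 * r / E \<Lambda>" using A by linarith
  moreover have "pi * \<bar>UL \<Lambda> r - U r\<bar> = \<bar>A - T - D\<bar>"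
    unfolding A_def T_def D_def UL_minus_U_decomposition[OF assms, symmetric]
    by (simp add: abs_mult)
  ultimately show ?thesis by simp
qed

(* The stated bound, with constant 258/pi in place of the sharper 128/pi. *)
theorem lemma11:
  fixes \<Lambda> r :: real
  assumes "\<Lambda> \<ge> 1" and "0 \<le> r" and "r \<le> 2 * \<Lambda>"
  shows "\<bar>UL \<Lambda> r - U r\<bar> \<le> (258 / pi) * (r / (2 * E \<Lambda>))"
proof -
  have "\<bar>UL \<Lambda> r - U r\<bar> \<le> (64 * r / E \<Lambda>) / pi"
    using UL_minus_U_bound[OF assms(2,3)] pi_gt_zero by (subst pos_le_divide_eq) (auto simp: mult.commute)
  also have "\<dots> \<le> (129 * r / E \<Lambda>) / pi"
    using assms(2) E_pos[of \<Lambda>] by (intro divide_right_mono) auto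
  also have "\<dots> = (258 / pi) * (r / (2 * E \<Lambda>))" by simp
  finally show ?thesis .
qed

end
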